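(* Let $t,d\in\mathbb{C}[[z]]$ with $t^2-4d$ having a simple zero at $z=0$, and let $\tilde X$ be the corresponding spectral curve. Then all objects of the groupoid $\widetilde{\mathrm{Conn}}(\tilde X)$ are isomorphic.
   Context: $\tilde X=\operatorname{Spf}\mathbb{C}[[\tilde z]]$ is the spectral curve $\xi^2-t(z)\xi+d(z)=0$ in $T^*\operatorname{Spf}\mathbb{C}[[z]]=\operatorname{Spf}\mathbb{C}[\xi][[z]]$, with coordinate $\tilde z=\sqrt{t^2-4d}$ and canonical $1$-form $\mu=\xi\,dz|_{\tilde X}$. $\widetilde{\mathrm{Conn}}(\tilde X)$ is the groupoid of pairs $(l,\delta)$ with $l$ a free rank-1 $\mathbb{C}[[\tilde z,\lambda]]$-module and $\delta:l\to\tilde z^{-1}l\,d\tilde z$ a $\mathbb{C}[[\lambda]]$-linear map with $\delta(fs)=f\delta s+\lambda s\,df$, residue $-\lambda/2$, and reduction mod $\lambda$ equal to $\mu$; morphisms are isomorphisms compatible with $\delta$. *)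

theory Defs
  imports "HOL-Computational_Algebra.Formal_Power_Series" "HOL-Algebra.Module"
begin

text \<open>The ring C[[zt,lam]] is modelled as C[[lam]][[zt]], i.e. the type complex fps fps:
  the outer variable is zt (the coordinate on the spectral curve), the inner one is lam.\<close>

definition Rzl :: "complex fps fps ring" where
  "Rzl = \<lparr>carrier = UNIV, monoid.mult = (*), one = 1, zero = 0, add = (+)\<rparr>"

definition zt :: "complex fps fps" where "zt = fps_X"

definition lam :: "complex fps fps" where "lam = fps_const fps_X"

definition lift_z :: "complex fps \<Rightarrow> complex fps fps" where
  "lift_z f = Abs_fps (\<lambda>n. fps_const (fps_nth f n))"

text \<open>Spectral curve xi^2 - t(z) xi + d(z) = 0 with coordinate zt = sqrt(t^2-4d) = 2 xi - t.
  zcoord t d : z as a power series in zt (z = D^{-1}(zt^2), D = t^2 - 4d);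
  xicoord t d : xi = (t(z) + zt)/2 as a power series in zt.\<close>
definition zcoord :: "complex fps \<Rightarrow> complex fps \<Rightarrow> complex fps" where
  "zcoord t d = fps_inv (t^2 - 4 * d) oo fps_X^2"

definition xicoord :: "complex fps \<Rightarrow> complex fps \<Rightarrow> complex fps" where
  "xicoord t d = fps_const (1/2) * ((t oo zcoord t d) + fps_X)"

text \<open>mu = xi dz |_Xt = mu_coeff t d * d zt.\<close>
definition mu_coeff :: "complex fps \<Rightarrow> complex fps \<Rightarrow> complex fps" where
  "mu_coeff t d = xicoord t d * fps_deriv (zcoord t d)"

text \<open>The target zt^{-1} l d zt is identified with l via
  omega \<mapsto> zt * (omega / d zt); accordingly delta is encoded by the map
  D = zt * delta / d zt : l \<rightarrow> l, and the Leibniz rule becomes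
  D (f s) = f D s + lam zt f' s.\<close>
definition is_tconn ::
  "complex fps \<Rightarrow> complex fps \<Rightarrow> (complex fps fps, 'm) module \<Rightarrow> ('m \<Rightarrow> 'm) \<Rightarrow> bool" where
  "is_tconn t d M D \<longleftrightarrow>
     module Rzl M
   \<and> (\<exists>s \<in> carrier M. bij_betw (\<lambda>r. r \<odot>\<^bsub>M\<^esub> s) UNIV (carrier M))
   \<and> D \<in> carrier M \<rightarrow> carrier M
   \<and> (\<forall>s \<in> carrier M. \<forall>s' \<in> carrier M. D (s \<oplus>\<^bsub>M\<^esub> s') = D s \<oplus>\<^bsub>M\<^esub> D s')
   \<and> (\<forall>c. \<forall>s \<in> carrier M. D (fps_const c \<odot>\<^bsub>M\<^esub> s) = fps_const c \<odot>\<^bsub>M\<^esub> D s)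
   \<and> (\<forall>f. \<forall>s \<in> carrier M.
        D (f \<odot>\<^bsub>M\<^esub> s) = f \<odot>\<^bsub>M\<^esub> D s \<oplus>\<^bsub>M\<^esub> (lam * zt * fps_deriv f) \<odot>\<^bsub>M\<^esub> s)
   \<and> (\<forall>s \<in> carrier M. \<exists>u \<in> carrier M.
        D s = (fps_const (fps_const (-1/2)) * lam) \<odot>\<^bsub>M\<^esub> s \<oplus>\<^bsub>M\<^esub> zt \<odot>\<^bsub>M\<^esub> u)
   \<and> (\<forall>s \<in> carrier M. \<exists>u \<in> carrier M.
        D s = lift_z (fps_X * mu_coeff t d) \<odot>\<^bsub>M\<^esub> s \<oplus>\<^bsub>M\<^esub> lam \<odot>\<^bsub>M\<^esub> u)"

definition tconn_iso ::
  "(complex fps fps, 'm) module \<Rightarrow> ('m \<Rightarrow> 'm) \<Rightarrow> (complex fps fps, 'n) module \<Rightarrow> ('n \<Rightarrow> 'n) \<Rightarrow> bool" where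
  "tconn_iso M D N E \<longleftrightarrow>
    (\<exists>\<phi>. bij_betw \<phi> (carrier M) (carrier N)
       \<and> (\<forall>s \<in> carrier M. \<forall>s' \<in> carrier M. \<phi> (s \<oplus>\<^bsub>M\<^esub> s') = \<phi> s \<oplus>\<^bsub>N\<^esub> \<phi> s')
       \<and> (\<forall>r. \<forall>s \<in> carrier M. \<phi> (r \<odot>\<^bsub>M\<^esub> s) = r \<odot>\<^bsub>N\<^esub> \<phi> s)
       \<and> (\<forall>s \<in> carrier M. \<phi> (D s) = E (\<phi> s)))"

end

(*
  After choosing a generator s of l, a connection is determined by the series a with
  D (f s) = (f a + lam zt f') s.  The residue condition fixes a modulo zt and the reduction
  condition fixes a modulo lam, so two such series differ by an element of
  (zt) \<inter> (lam) = (lam zt), say a - b = lam zt h.  The gauge transformation s \<mapsto> g e with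
  g' = h g then intertwines the two connections, and the linear ODE g' = h g has a unit
  solution in C[[lam]][[zt]] because the coefficients of the recursion only involve
  division by positive integers.
*)

theory Submission
  imports Defs
begin

fun fps_deriv_eq_mult_coeffs :: "'a::field_char_0 fps fps \<Rightarrow> nat \<Rightarrow> 'a fps" where
  "fps_deriv_eq_mult_coeffs h 0 = 1"
| "fps_deriv_eq_mult_coeffs h (Suc n) =
     fps_const (1 / of_nat (Suc n)) * (\<Sum>i=0..n. fps_nth h i * fps_deriv_eq_mult_coeffs h (n - i))"

lemma fps_deriv_eq_mult_solution:
  fixes h :: "'a::field_char_0 fps fps"
  obtains g where "fps_deriv g = h * g" "fps_nth g 0 = 1"
proof
  let ?g = "Abs_fps (fps_deriv_eq_mult_coeffs h)"
  show "fps_deriv ?g = h * ?g"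
  proof (rule fps_ext)
    fix n
    have "of_nat (Suc n) * fps_const (1 / of_nat (Suc n)) = (1 :: 'a fps)"
      by (simp del: of_nat_Suc add: fps_of_nat[symmetric] fps_const_mult)
    then show "fps_nth (fps_deriv ?g) n = fps_nth (h * ?g) n"
      by (simp add: fps_mult_nth mult.assoc[symmetric] del: of_nat_Suc)
  qed
qed simp

lemma fps_deriv_eq_mult_unit_solution:
  fixes h :: "'a::field_char_0 fps fps"
  obtains g where "fps_deriv g = h * g" "g dvd 1"
proof -
  obtain g where g: "fps_deriv g = h * g" "fps_nth g 0 = 1"
    using fps_deriv_eq_mult_solution .
  obtain g' where g': "fps_deriv g' = - h * g'" "fps_nth g' 0 = 1"
    using fps_deriv_eq_mult_solution .
  have "fps_deriv (g * g') = 0"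
    using g g' by (simp add: algebra_simps)
  then have "g * g' = fps_const (fps_nth (g * g') 0)"
    by (simp only: fps_deriv_eq_0_iff)
  then have "g * g' = 1"
    using g g' by simp
  then have "g dvd 1"
    by (metis dvdI)
  then show thesis
    using that g(1) by blast
qed

lemma fps_const_X_mult_X_dvd:
  fixes c :: "'a::comm_ring_1 fps fps"
  assumes "fps_nth c 0 = 0" and "\<And>n. fps_nth (fps_nth c n) 0 = 0"
  shows "fps_const fps_X * fps_X dvd c"
proof
  let ?q = "Abs_fps (\<lambda>n. fps_shift 1 (fps_nth c (Suc n)))"
  show "c = fps_const fps_X * fps_X * ?q"
  proof (rule fps_ext)
    fix n
    show "fps_nth c n = fps_nth (fps_const fps_X * fps_X * ?q) n"
    proof (cases n)
      case (Suc m)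
      have "fps_X * fps_shift 1 (fps_nth c (Suc m)) = fps_nth c (Suc m)"
        using assms(2) by (intro fps_ext) auto
      then show ?thesis
        using Suc by (simp add: mult.assoc)
    qed (simp add: assms(1))
  qed
qed

lemma lam_zt_dvd:
  assumes "zt dvd c" and "lam dvd c"
  shows "lam * zt dvd c"
proof -
  have "fps_nth c 0 = 0"
    using assms(1) by (auto simp: zt_def)
  moreover have "fps_nth (fps_nth c n) 0 = 0" for n
    using assms(2) by (auto simp: lam_def fps_mult_left_const_nth)
  ultimately show ?thesis
    unfolding lam_def zt_def by (rule fps_const_X_mult_X_dvd)
qed

locale free_rank_one =
  fixes M :: "(complex fps fps, 'm) module" and s :: 'm
  assumes module: "module Rzl M"
    and gen: "s \<in> carrier M"
    and bij_smult_gen: "bij_betw (\<lambda>r. r \<odot>\<^bsub>M\<^esub> s) UNIV (carrier M)"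
begin

lemma smult_gen_add: "(x + y) \<odot>\<^bsub>M\<^esub> s = x \<odot>\<^bsub>M\<^esub> s \<oplus>\<^bsub>M\<^esub> y \<odot>\<^bsub>M\<^esub> s"
  using module.smult_l_distr[OF module, of x y s] gen by (simp add: Rzl_def)

lemma smult_gen_mult: "(x * y) \<odot>\<^bsub>M\<^esub> s = x \<odot>\<^bsub>M\<^esub> (y \<odot>\<^bsub>M\<^esub> s)"
  using module.smult_assoc1[OF module, of x y s] gen by (simp add: Rzl_def)

definition coord :: "'m \<Rightarrow> complex fps fps" where
  "coord = inv_into UNIV (\<lambda>r. r \<odot>\<^bsub>M\<^esub> s)"

lemma smult_gen_eq_iff: "r \<odot>\<^bsub>M\<^esub> s = r' \<odot>\<^bsub>M\<^esub> s \<longleftrightarrow> r = r'"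
  using bij_betw_imp_inj_on[OF bij_smult_gen] by (auto dest: inj_onD)

lemma coord_smult_gen [simp]: "coord (r \<odot>\<^bsub>M\<^esub> s) = r"
  unfolding coord_def using bij_betw_inv_into_left[OF bij_smult_gen] by blast

lemma smult_coord [simp]: "x \<in> carrier M \<Longrightarrow> coord x \<odot>\<^bsub>M\<^esub> s = x"
  unfolding coord_def using bij_betw_inv_into_right[OF bij_smult_gen] by blast

lemma bij_betw_coord: "bij_betw coord (carrier M) UNIV"
  unfolding coord_def by (rule bij_betw_inv_into[OF bij_smult_gen])

lemma coord_add:
  assumes "x \<in> carrier M" and "y \<in> carrier M"
  shows "coord (x \<oplus>\<^bsub>M\<^esub> y) = coord x + coord y"
proof -
  have "x \<oplus>\<^bsub>M\<^esub> y = (coord x + coord y) \<odot>\<^bsub>M\<^esub> s"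
    using assms by (simp add: smult_gen_add)
  then show ?thesis by simp
qed

lemma coord_smult:
  assumes "x \<in> carrier M"
  shows "coord (r \<odot>\<^bsub>M\<^esub> x) = r * coord x"
proof -
  have "r \<odot>\<^bsub>M\<^esub> x = (r * coord x) \<odot>\<^bsub>M\<^esub> s"
    using assms by (simp add: smult_gen_mult)
  then show ?thesis by simp
qed

end

lemma is_tconn_obtain_generator:
  assumes "is_tconn t d M D"
  obtains s a where "free_rank_one M s"
    and "\<And>f. D (f \<odot>\<^bsub>M\<^esub> s) = (f * a + lam * zt * fps_deriv f) \<odot>\<^bsub>M\<^esub> s"
    and "zt dvd a - fps_const (fps_const (-1/2)) * lam"
    and "lam dvd a - lift_z (fps_X * mu_coeff t d)"
proof -
  note tconn = assms[unfolded is_tconn_def]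
  obtain s where "free_rank_one M s"
    using tconn by (auto intro: free_rank_one.intro)
  then interpret free_rank_one M s .
  define a where "a = coord (D s)"
  have "D s \<in> carrier M"
    using tconn gen by blast
  then have Ds: "D s = a \<odot>\<^bsub>M\<^esub> s"
    by (simp add: a_def)
  have "D (f \<odot>\<^bsub>M\<^esub> s) = (f * a + lam * zt * fps_deriv f) \<odot>\<^bsub>M\<^esub> s" for f
    using tconn gen by (simp add: Ds smult_gen_add smult_gen_mult)
  moreover have "zt dvd a - fps_const (fps_const (-1/2)) * lam"
  proof -
    obtain u where "u \<in> carrier M"
      and "D s = (fps_const (fps_const (-1/2)) * lam) \<odot>\<^bsub>M\<^esub> s \<oplus>\<^bsub>M\<^esub> zt \<odot>\<^bsub>M\<^esub> u"
      using tconn gen by blast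
    then have "a \<odot>\<^bsub>M\<^esub> s = (fps_const (fps_const (-1/2)) * lam + zt * coord u) \<odot>\<^bsub>M\<^esub> s"
      by (simp add: Ds smult_gen_add smult_gen_mult)
    then have "a = fps_const (fps_const (-1/2)) * lam + zt * coord u"
      by (simp only: smult_gen_eq_iff)
    then show ?thesis by simp
  qed
  moreover have "lam dvd a - lift_z (fps_X * mu_coeff t d)"
  proof -
    obtain u where "u \<in> carrier M"
      and "D s = lift_z (fps_X * mu_coeff t d) \<odot>\<^bsub>M\<^esub> s \<oplus>\<^bsub>M\<^esub> lam \<odot>\<^bsub>M\<^esub> u"
      using tconn gen by blast
    then have "a \<odot>\<^bsub>M\<^esub> s = (lift_z (fps_X * mu_coeff t d) + lam * coord u) \<odot>\<^bsub>M\<^esub> s"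
      by (simp add: Ds smult_gen_add smult_gen_mult)
    then have "a = lift_z (fps_X * mu_coeff t d) + lam * coord u"
      by (simp only: smult_gen_eq_iff)
    then show ?thesis by simp
  qed
  ultimately show thesis
    using that \<open>free_rank_one M s\<close> by blast
qed

lemma tconn_iso_gauge:
  assumes "free_rank_one M s" and "free_rank_one N e"
    and D: "\<And>f. D (f \<odot>\<^bsub>M\<^esub> s) = (f * a + lam * zt * fps_deriv f) \<odot>\<^bsub>M\<^esub> s"
    and E: "\<And>f. E (f \<odot>\<^bsub>N\<^esub> e) = (f * b + lam * zt * fps_deriv f) \<odot>\<^bsub>N\<^esub> e"
    and gauge: "lam * zt * fps_deriv g = (a - b) * g" and "g dvd 1"
  shows "tconn_iso M D N E"
proof -
  interpret M: free_rank_one M s by fact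
  interpret N: free_rank_one N e by fact
  define \<phi> where "\<phi> = (\<lambda>x. (M.coord x * g) \<odot>\<^bsub>N\<^esub> e)"
  have bij_mult_g: "bij_betw (\<lambda>r. r * g) UNIV (UNIV :: complex fps fps set)"
  proof -
    obtain g' where "1 = g * g'" using \<open>g dvd 1\<close> by blast
    then show ?thesis
      by (intro bij_betwI[where g = "\<lambda>r. r * g'"]) (auto simp: algebra_simps)
  qed
  have "bij_betw \<phi> (carrier M) (carrier N)"
    using bij_betw_trans[OF M.bij_betw_coord bij_betw_trans[OF bij_mult_g N.bij_smult_gen]]
    by (simp add: \<phi>_def comp_def)
  moreover have "\<phi> (x \<oplus>\<^bsub>M\<^esub> y) = \<phi> x \<oplus>\<^bsub>N\<^esub> \<phi> y" if "x \<in> carrier M" "y \<in> carrier M" for x y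
    using that by (simp add: \<phi>_def M.coord_add distrib_right N.smult_gen_add)
  moreover have "\<phi> (r \<odot>\<^bsub>M\<^esub> x) = r \<odot>\<^bsub>N\<^esub> \<phi> x" if "x \<in> carrier M" for r x
    using that by (simp add: \<phi>_def M.coord_smult mult.assoc N.smult_gen_mult[of r, symmetric])
  moreover have "\<phi> (D x) = E (\<phi> x)" if "x \<in> carrier M" for x
  proof -
    define f where "f = M.coord x"
    have x: "x = f \<odot>\<^bsub>M\<^esub> s"
      using that by (simp add: f_def)
    have "(f * a + lam * zt * fps_deriv f) * g = (f * g) * b + lam * zt * fps_deriv (f * g)"
      using arg_cong[OF gauge, of "(*) f"] by (simp add: algebra_simps)
    then show ?thesis
      by (simp add: x D E \<phi>_def)
  qed
  ultimately show ?thesis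
    unfolding tconn_iso_def by blast
qed

theorem lemma4p10:
  fixes t d :: "complex fps"
    and M :: "(complex fps fps, 'm) module" and D :: "'m \<Rightarrow> 'm"
    and N :: "(complex fps fps, 'n) module" and E :: "'n \<Rightarrow> 'n"
  assumes "fps_nth (t^2 - 4 * d) 0 = 0" and "fps_nth (t^2 - 4 * d) 1 \<noteq> 0"
    and "is_tconn t d M D" and "is_tconn t d N E"
  shows "tconn_iso M D N E"
proof -
  obtain s a where M: "free_rank_one M s"
    and D: "\<And>f. D (f \<odot>\<^bsub>M\<^esub> s) = (f * a + lam * zt * fps_deriv f) \<odot>\<^bsub>M\<^esub> s"
    and a_res: "zt dvd a - fps_const (fps_const (-1/2)) * lam"
    and a_mu: "lam dvd a - lift_z (fps_X * mu_coeff t d)"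
    using is_tconn_obtain_generator[OF assms(3)] by blast
  obtain e b where N: "free_rank_one N e"
    and E: "\<And>f. E (f \<odot>\<^bsub>N\<^esub> e) = (f * b + lam * zt * fps_deriv f) \<odot>\<^bsub>N\<^esub> e"
    and b_res: "zt dvd b - fps_const (fps_const (-1/2)) * lam"
    and b_mu: "lam dvd b - lift_z (fps_X * mu_coeff t d)"
    using is_tconn_obtain_generator[OF assms(4)] by blast
  have "zt dvd a - b"
    using dvd_diff[OF a_res b_res] by simp
  moreover have "lam dvd a - b"
    using dvd_diff[OF a_mu b_mu] by simp
  ultimately obtain h where h: "a - b = lam * zt * h"
    using lam_zt_dvd by blast
  obtain g where "fps_deriv g = h * g" and "g dvd 1"
    using fps_deriv_eq_mult_unit_solution .
  then have "lam * zt * fps_deriv g = (a - b) * g"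
    by (simp add: h mult.assoc)
  then show ?thesis
    using tconn_iso_gauge[OF M N D E] \<open>g dvd 1\<close> by blast
qed

end
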